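(* Let $\Gamma$ and the data $s_0,\eta_0,\Xi$ be as in the context and let $B\subset\mathbb R^{n-1}$ be a fixed closed ball. There is a constant $c>0$ such that for any two distinct cusps $\gamma_1\xi_1\infty,\gamma_2\xi_2\infty\in B$ ($\gamma_i\in\Gamma$, $\xi_i\in\Xi$), $$\|\gamma_1\xi_1\infty-\gamma_2\xi_2\infty\|\ge\frac{c}{\sqrt{h(\gamma_1\xi_1\infty)\,h(\gamma_2\xi_2\infty)}}.$$
   Context: $n\ge2$, $G=\mathrm{SO}(n,1)$, $K\cong\mathrm{SO}(n)$ maximal compact. $A=\{a(t)\}$ a one-parameter $\mathbb R$-split torus with $\mathfrak g=\mathfrak g_{-1}\oplus\mathfrak z(A)\oplus\mathfrak g_{+1}$, $\mathrm{Ad}(a(t))=e^{\pm t}$ on $\mathfrak g_{\pm1}$; $M=Z_G(A)\cap K$, $N=\exp\mathfrak g_{+1}$, $\mathfrak g_{+1}\cong\mathbb R^{n-1}$ with $\mathrm{Ad}(M)$-invariant Euclidean norm $\|\cdot\|$, $u(\mathbf x)=\exp\mathbf x$; $\sigma\in K$ with $\sigma^2=e$, $\sigma a(t)\sigma^{-1}=a(-t)$; $P=MAN$. Each $g\in G\setminus P$ is $g=u(\mathbf x)\sigma ma(r)u(\mathbf y)$ with $\mathbf x,r$ unique; $\partial\mathbb H^n\cong\mathbb R^{n-1}\cup\{\infty\}$ via $u(\mathbf x)\sigma P\mapsto\mathbf x$, $P\mapsto\infty$. $\Omega(\eta,s)=\eta\{a(t):t\ge s\}K$. $\Gamma$ discrete,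 finite covolume, $\Gamma\backslash\mathbb H^n$ non-compact, with fixed $s_0>0$, compact $\eta_0\subset N$, finite $\Xi\ni e$ satisfying: (i) $G=\Gamma\Xi\Omega(\eta_0,s_0)$; (ii) $\Gamma\cap\xi N\xi^{-1}$ cocompact in $\xi N\xi^{-1}$; (iii) for compact $\eta$, $\{\gamma:\gamma\Xi\Omega(\eta,s_0)\cap\Omega(\eta,s_0)\ne\emptyset\}$ finite; (iv) for compact $\eta\supseteq\eta_0$ some $s_1>s_0$ with $\gamma\xi_1\Omega(\eta,s_0)\cap\xi_2\Omega(\eta,s_1)\ne\emptyset\Rightarrow\xi_1=\xi_2,\gamma\in\xi_1NM\xi_1^{-1}$. Height: for $\gamma\xi=u(\mathbf x_1)\sigma ma(r)u(\mathbf y)$, $\gamma\xi\infty=\mathbf x_1$ and $h(\gamma\xi\infty)=e^r$. *)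

theory Defs
  imports "HOL-Analysis.Analysis"
begin

text \<open>Concrete model of G = SO(n,1) (identity component).  The space
  R^{n-1} is an arbitrary Euclidean space 'v (so n - 1 = DIM('v) >= 1, i.e. n >= 2),
  and G acts linearly on R x 'v x R = R^{n+1}, preserving the quadratic form
  Q(p,v,q) = 2pq - |v|^2 of signature (1,n).  Group elements are maps, the group
  law is composition, the identity is id; topology on maps is the product
  (pointwise) topology, which on linear maps is the usual matrix topology.\<close>

type_synonym 'v pt = "real \<times> 'v \<times> real"
type_synonym 'v grp = "'v pt \<Rightarrow> 'v pt"

definition lorQ :: "('v::euclidean_space) pt \<Rightarrow> real" where
  "lorQ w = (case w of (p, v, q) \<Rightarrow> 2 * p * q - (norm v)^2)"

definition OQ :: "('v::euclidean_space) grp set" where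
  "OQ = {L. linear L \<and> (\<forall>w. lorQ (L w) = lorQ w)}"

definition Gr :: "('v::euclidean_space) grp set" where
  "Gr = connected_component_set OQ id"

definition ator :: "real \<Rightarrow> ('v::euclidean_space) grp" where
  "ator t = (\<lambda>(p, v, q). (exp t * p, v, exp (- t) * q))"

definition uN :: "('v::euclidean_space) \<Rightarrow> 'v grp" where
  "uN x = (\<lambda>(p, v, q). (p + x \<bullet> v + (norm x)^2 / 2 * q, v + q *\<^sub>R x, q))"

definition Nu :: "('v::euclidean_space) grp set" where
  "Nu = range uN"

definition Kc :: "('v::euclidean_space) grp set" where
  "Kc = {g \<in> Gr. g (1, 0, 1) = (1, 0, 1)}"

definition Mc :: "('v::euclidean_space) grp set" where
  "Mc = {m \<in> Kc. \<forall>t. m \<circ> ator t = ator t \<circ> m}"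

text \<open>sigma in K with sigma^2 = e and sigma a(t) sigma^{-1} = a(-t):
  swap the two null coordinates and reflect 'v in a basis hyperplane.\<close>
definition reflv :: "('v::euclidean_space) \<Rightarrow> 'v" where
  "reflv v = v - (2 * (v \<bullet> (SOME b. b \<in> (Basis::'v set)))) *\<^sub>R (SOME b. b \<in> (Basis::'v set))"

definition sigm :: "('v::euclidean_space) grp" where
  "sigm = (\<lambda>(p, v, q). (q, reflv v, p))"

definition Omega :: "('v::euclidean_space) grp set \<Rightarrow> real \<Rightarrow> 'v grp set" where
  "Omega eta s = {h \<circ> ator t \<circ> k | h t k. h \<in> eta \<and> s \<le> t \<and> k \<in> Kc}"

text \<open>Bruhat coordinates: g = u(x) sigma m a(r) u(y) with m in M.  For g outside
  P = MAN these exist, and x, r are unique; x is the boundary point g infinity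
  and e^r is its height.\<close>
definition bruhat_coords :: "('v::euclidean_space) grp \<Rightarrow> 'v \<Rightarrow> real \<Rightarrow> bool" where
  "bruhat_coords g x r \<longleftrightarrow> (\<exists>m \<in> Mc. \<exists>y. g = uN x \<circ> sigm \<circ> m \<circ> ator r \<circ> uN y)"

definition is_subgroup :: "('v::euclidean_space) grp set \<Rightarrow> bool" where
  "is_subgroup H \<longleftrightarrow> H \<subseteq> Gr \<and> id \<in> H \<and> (\<forall>g\<in>H. \<forall>h\<in>H. g \<circ> h \<in> H)
     \<and> (\<forall>g\<in>H. inv g \<in> H)"

definition discrete_set :: "('v::euclidean_space) grp set \<Rightarrow> bool" where
  "discrete_set H \<longleftrightarrow> (\<forall>g\<in>H. \<exists>U. open U \<and> U \<inter> H = {g})"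

definition conjN :: "('v::euclidean_space) grp \<Rightarrow> 'v grp set" where
  "conjN xi = {xi \<circ> h \<circ> inv xi | h. h \<in> Nu}"

definition conjNM :: "('v::euclidean_space) grp \<Rightarrow> 'v grp set" where
  "conjNM xi = {xi \<circ> h \<circ> m \<circ> inv xi | h m. h \<in> Nu \<and> m \<in> Mc}"

definition cocompact_in :: "('v::euclidean_space) grp set \<Rightarrow> 'v grp set \<Rightarrow> bool" where
  "cocompact_in H L \<longleftrightarrow> (\<exists>C. compact C \<and> C \<subseteq> L \<and> L = {h \<circ> c | h c. h \<in> H \<and> c \<in> C})"

end

theory Submission
  imports Defs
begin

text \<open>In the hyperboloid model a cusp \<open>g \<infinity>\<close> is the isotropic vector \<open>g (1, 0, 0)\<close>; for Bruhat
  coordinates \<open>(x, r)\<close> it equals \<open>e\<^sup>r (|x|\<^sup>2/2, x, 1)\<close>, so the Lorentz pairing of two cusps is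
  \<open>b = e\<^sup>r\<^sup>1 e\<^sup>r\<^sup>2 |x\<^sub>1 - x\<^sub>2|\<^sup>2 / 2\<close>. If \<open>0 < b < e\<^sup>-\<^sup>2\<^sup>s\<^sup>1\<close>, the hyperboloid point
  \<open>(N\<^sub>1 + N\<^sub>2) / \<surd>b\<close> lies on the horospheres of depth \<open>-ln \<surd>b > s\<^sub>1\<close> at both cusps. Condition (ii)
  places it in translates \<open>\<gamma>\<^sub>i \<xi>\<^sub>i \<Omega>(\<eta>, s)\<close> of one Siegel set, and condition (iv) then forces the
  cusps to coincide, contradicting \<open>b > 0\<close>. Hence \<open>b \<ge> e\<^sup>-\<^sup>2\<^sup>s\<^sup>1\<close>, i.e. the bound holds with
  \<open>c = \<surd>2 e\<^sup>-\<^sup>s\<^sup>1\<close>.\<close>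

definition lorB :: "('v::euclidean_space) pt \<Rightarrow> 'v pt \<Rightarrow> real" where
  "lorB w u = (case w of (p, v, q) \<Rightarrow> case u of (p', v', q') \<Rightarrow> p * q' + p' * q - v \<bullet> v')"

lemma lorB_sym: "lorB w u = lorB u w"
  by (cases w; cases u) (simp add: lorB_def inner_commute)

lemma lorB_add_left: "lorB (w1 + w2) u = lorB w1 u + lorB w2 u"
  by (cases w1; cases w2; cases u) (simp add: lorB_def inner_add_left algebra_simps)

lemma lorB_scaleR_left: "lorB (a *\<^sub>R w) u = a * lorB w u"
  by (cases w; cases u) (simp add: lorB_def algebra_simps)

lemma lorB_add_right: "lorB u (w1 + w2) = lorB u w1 + lorB u w2"
  by (metis lorB_add_left lorB_sym)

lemma lorB_scaleR_right: "lorB u (a *\<^sub>R w) = a * lorB u w"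
  by (metis lorB_scaleR_left lorB_sym)

lemma lorQ_eq_lorB: "lorQ w = lorB w w"
  by (cases w) (simp add: lorB_def lorQ_def power2_norm_eq_inner)

lemma lorB_polar: "lorB w u = (lorQ (w + u) - lorQ w - lorQ u) / 2"
  by (simp add: lorQ_eq_lorB lorB_add_left lorB_add_right lorB_sym)

lemma lorB_nondegenerate:
  assumes "\<And>u. lorB w u = 0" shows "w = (0::('v::euclidean_space) pt)"
proof (cases w)
  case (fields p v q)
  have "lorB w (1,0,0) = 0" "lorB w (0,0,1) = 0" "lorB w (0,v,0) = 0" using assms by auto
  then show ?thesis using fields by (auto simp: lorB_def zero_prod_def)
qed

lemma OQ_linear: "L \<in> OQ \<Longrightarrow> linear L"
  by (simp add: OQ_def)

lemma OQ_lorQ: "L \<in> OQ \<Longrightarrow> lorQ (L w) = lorQ w"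
  by (simp add: OQ_def del: split_paired_All)

lemma OQ_lorB: "L \<in> OQ \<Longrightarrow> lorB (L w) (L u) = lorB w u"
  by (simp add: lorB_polar OQ_lorQ OQ_linear flip: linear_add)

lemma OQ_inj: assumes "L \<in> OQ" shows "inj L"
proof (rule linear_injective_0[OF OQ_linear[OF assms], THEN iffD2], intro allI impI)
  fix w assume "L w = 0"
  then have "lorB w u = 0" for u
    using OQ_lorB[OF assms, of w u] by (simp add: lorB_def OQ_linear[OF assms] linear_0 zero_prod_def)
  then show "w = 0" by (rule lorB_nondegenerate)
qed

lemma OQ_surj: "L \<in> OQ \<Longrightarrow> surj L"
  using OQ_inj OQ_linear linear_injective_imp_surjective by blast

lemma OQ_inv_left: "L \<in> OQ \<Longrightarrow> inv L (L w) = w"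
  by (simp add: OQ_inj)

lemma OQ_inv_right: "L \<in> OQ \<Longrightarrow> L (inv L w) = w"
  by (simp add: OQ_surj surj_f_inv_f)

lemma OQ_inv_comp: "L \<in> OQ \<Longrightarrow> inv L \<circ> L = id" "L \<in> OQ \<Longrightarrow> L \<circ> inv L = id"
  by (auto simp: OQ_inv_left OQ_inv_right fun_eq_iff)

lemma OQ_inv: assumes "L \<in> OQ" shows "inv L \<in> OQ"
proof -
  have "bounded_linear (inv L)"
    using assms OQ_inj OQ_linear inj_linear_imp_inv_bounded_linear linear_conv_bounded_linear by blast
  moreover have "lorQ (inv L w) = lorQ w" for w
    by (metis OQ_inv_right OQ_lorQ assms)
  ultimately show ?thesis by (simp add: OQ_def bounded_linear.linear)
qed

lemma OQ_comp: "L \<in> OQ \<Longrightarrow> M \<in> OQ \<Longrightarrow> L \<circ> M \<in> OQ"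
  by (simp add: OQ_def linear_compose del: split_paired_All)

lemma OQ_id: "id \<in> OQ"
  by (simp add: OQ_def linear_ident id_def)

lemma continuous_on_linear_conj:
  assumes "linear (L::('v::euclidean_space) pt \<Rightarrow> 'v pt)"
  shows "continuous_on S (\<lambda>c::'v grp. L \<circ> c \<circ> M)"
proof (rule continuous_on_coordinatewise_then_product)
  fix i
  have "continuous_on UNIV L" using assms linear_continuous_on linear_conv_bounded_linear by blast
  then have "continuous_on UNIV (\<lambda>c::'v grp. L (c (M i)))"
    by (rule continuous_on_compose2) auto
  then show "continuous_on S (\<lambda>c::'v grp. (L \<circ> c \<circ> M) i)"
    unfolding o_def by (rule continuous_on_subset) simp
qed

lemma Gr_OQ: "Gr \<subseteq> OQ"
  by (simp add: Gr_def connected_component_subset)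

lemma id_Gr: "id \<in> Gr"
  by (simp add: Gr_def OQ_id)

lemma translate_Gr_subset_component:
  assumes "L \<in> OQ" shows "(\<lambda>g. L \<circ> g) ` Gr \<subseteq> connected_component_set OQ L"
proof (rule connected_component_maximal)
  have "continuous_on Gr (\<lambda>g. L \<circ> g \<circ> id)"
    using assms by (intro continuous_on_linear_conj OQ_linear)
  then show "connected ((\<lambda>g. L \<circ> g) ` Gr)"
    unfolding Gr_def by (auto intro: connected_continuous_image)
  show "L \<in> (\<lambda>g. L \<circ> g) ` Gr" using id_Gr by (metis comp_id image_eqI)
  show "(\<lambda>g. L \<circ> g) ` Gr \<subseteq> OQ" using assms Gr_OQ OQ_comp by blast
qed

lemma Gr_comp: assumes "g \<in> Gr" "h \<in> Gr" shows "g \<circ> h \<in> Gr"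
proof -
  have "connected_component_set OQ g = Gr"
    using assms(1) unfolding Gr_def by (rule connected_component_eq)
  then show ?thesis using translate_Gr_subset_component[of g] assms Gr_OQ by blast
qed

lemma Gr_inv: assumes "g \<in> Gr" shows "inv g \<in> Gr"
proof -
  have g: "g \<in> OQ" using assms Gr_OQ by blast
  have "id \<in> (\<lambda>h. inv g \<circ> h) ` Gr" using assms OQ_inv_comp(1)[OF g] by (metis image_eqI)
  then have "id \<in> connected_component_set OQ (inv g)"
    using translate_Gr_subset_component[OF OQ_inv[OF g]] by blast
  then have "Gr = connected_component_set OQ (inv g)"
    unfolding Gr_def by (rule connected_component_eq)
  then show ?thesis using OQ_inv[OF g] by (metis connected_component_refl mem_Collect_eq)
qed

lemma path_from_id_Gr:
  assumes "continuous_on {0..1::real} f" "f 0 = id" "f ` {0..1} \<subseteq> OQ"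
  shows "f 1 \<in> Gr"
proof -
  have "connected (f ` {0..1})" using assms(1) by (rule connected_continuous_image) simp
  moreover have "id \<in> f ` {0..1}" using assms(2) by force
  ultimately have "f ` {0..1} \<subseteq> Gr" unfolding Gr_def using assms(3) by (simp add: connected_component_maximal)
  then show ?thesis by auto
qed

lemma uN_OQ: "uN z \<in> OQ"
proof -
  have "linear (uN z)"
    by (rule linearI) (auto simp: uN_def algebra_simps inner_add_right split: prod.splits)
  moreover have "lorQ (uN z w) = lorQ w" for w
    by (cases w) (simp add: uN_def lorQ_def power2_norm_eq_inner inner_add_left inner_add_right
        inner_commute algebra_simps)
  ultimately show ?thesis by (simp add: OQ_def del: split_paired_All)
qed

lemma uN_zero: "uN 0 = id"
  by (auto simp: uN_def fun_eq_iff)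

lemma uN_Gr: "uN z \<in> Gr"
proof -
  have "(\<lambda>s::real. uN (s *\<^sub>R z)) 1 \<in> Gr"
  proof (rule path_from_id_Gr)
    show "continuous_on {0..1} (\<lambda>s::real. uN (s *\<^sub>R z))"
      by (rule continuous_on_coordinatewise_then_product)
        (simp add: uN_def case_prod_beta, intro continuous_intros, simp)
  qed (auto simp: uN_zero uN_OQ)
  then show ?thesis by simp
qed

lemma ator_OQ: "(ator t :: ('v::euclidean_space) grp) \<in> OQ"
proof -
  have "linear (ator t :: 'v grp)"
    by (rule linearI) (auto simp: ator_def algebra_simps split: prod.splits)
  moreover have "lorQ (ator t w) = lorQ w" for w :: "'v pt"
    by (cases w) (simp add: ator_def lorQ_def exp_minus field_simps)
  ultimately show ?thesis by (simp add: OQ_def del: split_paired_All)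
qed

lemma ator_zero: "ator 0 = id"
  by (auto simp: ator_def fun_eq_iff)

lemma ator_Gr: "ator t \<in> Gr"
proof -
  have "(\<lambda>s::real. ator (s * t)) 1 \<in> Gr"
  proof (rule path_from_id_Gr)
    show "continuous_on {0..1} (\<lambda>s::real. ator (s * t))"
      by (rule continuous_on_coordinatewise_then_product)
        (simp add: ator_def case_prod_beta, intro continuous_intros)
  qed (auto simp: ator_zero ator_OQ)
  then show ?thesis by simp
qed

lemma ator_eigen_exp:
  assumes "ator t w = exp t *\<^sub>R w" "t \<noteq> 0" shows "w = (fst w, 0, 0)"
proof (cases w)
  case (fields p v q)
  have "exp t \<noteq> 1" "exp (- t) \<noteq> exp t" using assms(2) by simp_all
  then show ?thesis using assms(1) fields by (auto simp: ator_def scaleR_cancel_right[of 1, simplified])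
qed

lemma ator_eigen_exp_neg:
  assumes "ator t w = exp (- t) *\<^sub>R w" "t \<noteq> 0" shows "w = (0, 0, snd (snd w))"
proof (cases w)
  case (fields p v q)
  have "exp (- t) \<noteq> 1" "exp (- t) \<noteq> exp t" using assms(2) by simp_all
  then show ?thesis using assms(1) fields by (auto simp: ator_def scaleR_cancel_right[of 1, simplified])
qed

abbreviation null_inf :: "('v::euclidean_space) pt" where
  "null_inf \<equiv> (1, 0, 0)"

abbreviation base_pt :: "('v::euclidean_space) pt" where
  "base_pt \<equiv> (1, 0, 1)"

lemma Mc_fixes_null_inf:
  assumes "m \<in> Mc" shows "m null_inf = null_inf"
proof -
  have lin: "linear m" and fix_base: "m base_pt = base_pt" and "m \<circ> ator 1 = ator 1 \<circ> m"
    using assms Gr_OQ OQ_linear by (auto simp: Mc_def Kc_def)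
  then have comm: "m (ator 1 w) = ator 1 (m w)" for w by (metis comp_apply)
  have "ator 1 (m null_inf) = exp 1 *\<^sub>R m null_inf"
    using comm[of null_inf] by (simp add: ator_def linear_scale[OF lin, symmetric])
  then obtain a where e: "m null_inf = (a, 0, 0)" by (metis ator_eigen_exp one_neq_zero)
  have "ator 1 (m (0,0,1)) = exp (- 1) *\<^sub>R m (0,0,1)"
    using comm[of "(0,0,1)"] by (simp add: ator_def linear_scale[OF lin, symmetric])
  then obtain c where f: "m (0,0,1) = (0, 0, c)" by (metis ator_eigen_exp_neg one_neq_zero)
  have "m null_inf + m (0,0,1) = base_pt"
    using fix_base by (simp flip: linear_add[OF lin])
  then show ?thesis by (simp add: e f)
qed

lemma Nu_fixes_null_inf: "h \<in> Nu \<Longrightarrow> h null_inf = null_inf"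
  by (auto simp: Nu_def uN_def)

text \<open>The isotropic vector representing the boundary point \<open>x\<close> at height \<open>a\<close>.\<close>
definition null_vec :: "real \<Rightarrow> ('v::euclidean_space) \<Rightarrow> 'v pt" where
  "null_vec a x = (a * (norm x)^2 / 2, a *\<^sub>R x, a)"

lemma lorB_null_vec: "lorB (null_vec a x) (null_vec b y) = a * b * (norm (x - y))^2 / 2"
  by (simp add: lorB_def null_vec_def power2_norm_eq_inner inner_diff_left inner_diff_right
      inner_commute field_simps)

lemma bruhat_coords_null_inf:
  assumes "bruhat_coords g x r" shows "g null_inf = null_vec (exp r) x"
proof -
  obtain m y where m: "m \<in> Mc" and g: "g = uN x \<circ> sigm \<circ> m \<circ> ator r \<circ> uN y"
    using assms by (auto simp: bruhat_coords_def)
  have "linear m" using m Gr_OQ OQ_linear by (auto simp: Mc_def Kc_def)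
  then have "m (ator r (uN y null_inf)) = exp r *\<^sub>R null_inf"
    using Mc_fixes_null_inf[OF m] linear_scale[of m "exp r" null_inf] by (simp add: uN_def ator_def)
  then show ?thesis by (simp add: g sigm_def reflv_def uN_def null_vec_def)
qed

lemma hyperboloid_in_horosphere:
  assumes "lorQ w = 2" "lorB w null_inf = exp (- t)"
  obtains z where "w = uN z (ator t base_pt)"
proof -
  obtain p v where w: "w = (p, v, exp (- t))" using assms(2) by (cases w) (simp add: lorB_def)
  have "p = exp t * (2 + (norm v)^2) / 2" using assms(1) by (simp add: w lorQ_def exp_minus field_simps)
  then have "w = uN (exp t *\<^sub>R v) (ator t base_pt)"
    by (simp add: w uN_def ator_def exp_minus power2_eq_square field_simps)
  then show ?thesis by (rule that)
qed

lemma OQ_conj_cancel: "xi \<in> OQ \<Longrightarrow> inv xi \<circ> (xi \<circ> h \<circ> inv xi) \<circ> xi = h"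
  by (auto simp: fun_eq_iff OQ_inv_left)

lemma conjN_fixes_cusp: "xi \<in> OQ \<Longrightarrow> d \<in> conjN xi \<Longrightarrow> d (xi null_inf) = xi null_inf"
  by (auto simp: conjN_def OQ_inv_left Nu_fixes_null_inf)

lemma conjNM_fixes_cusp: "xi \<in> OQ \<Longrightarrow> d \<in> conjNM xi \<Longrightarrow> d (xi null_inf) = xi null_inf"
  by (auto simp: conjNM_def OQ_inv_left Nu_fixes_null_inf Mc_fixes_null_inf)

lemma OQ_null_inf_isotropic: "L \<in> OQ \<Longrightarrow> lorQ (L null_inf) = 0"
  using OQ_lorQ[of L null_inf] by (simp add: lorQ_def)

lemma is_subgroup_comp_OQ: "is_subgroup Gam \<Longrightarrow> g \<in> Gam \<Longrightarrow> xi \<in> Gr \<Longrightarrow> g \<circ> xi \<in> OQ"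
  using Gr_comp Gr_OQ by (auto simp: is_subgroup_def)

lemma Nu_Gr: "Nu \<subseteq> Gr"
  using uN_Gr by (auto simp: Nu_def)

lemma inv_comp_Kc:
  assumes "G1 \<in> Gr" "G2 \<in> Gr" "G1 base_pt = G2 base_pt" shows "inv G1 \<circ> G2 \<in> Kc"
proof -
  have "(inv G1 \<circ> G2) base_pt = base_pt"
    using assms Gr_OQ OQ_inv_left by (metis comp_apply subsetD)
  then show ?thesis using assms by (simp add: Kc_def Gr_comp Gr_inv)
qed

lemma id_Kc: "id \<in> Kc"
  by (simp add: Kc_def id_Gr)

lemma Omega_memI: "h \<in> eta \<Longrightarrow> s \<le> t \<Longrightarrow> k \<in> Kc \<Longrightarrow> h \<circ> ator t \<circ> k \<in> Omega eta s"
  by (auto simp: Omega_def)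

text \<open>\<open>\<eta>\<close> is \<open>\<eta>\<^sub>0\<close> together with the compact fundamental sets of condition (ii), conjugated
  back into \<open>N\<close>.\<close>
lemma cusp_fundamental_set:
  assumes "finite Xi" "Xi \<subseteq> OQ" "compact eta0" "eta0 \<subseteq> Nu"
    and "\<forall>xi\<in>Xi. cocompact_in (Gam \<inter> conjN xi) (conjN xi)"
  obtains eta where "compact eta" "eta0 \<subseteq> eta" "eta \<subseteq> Nu"
    and "\<And>xi z. xi \<in> Xi \<Longrightarrow> \<exists>d \<in> Gam \<inter> conjN xi. \<exists>n \<in> eta. xi \<circ> uN z = d \<circ> xi \<circ> n"
proof -
  have "\<forall>xi\<in>Xi. \<exists>C. compact C \<and> C \<subseteq> conjN xi \<and>
      conjN xi = {d \<circ> c | d c. d \<in> Gam \<inter> conjN xi \<and> c \<in> C}"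
    using assms(5) by (simp add: cocompact_in_def)
  then obtain C where "\<forall>xi\<in>Xi. compact (C xi) \<and> C xi \<subseteq> conjN xi \<and>
      conjN xi = {d \<circ> c | d c. d \<in> Gam \<inter> conjN xi \<and> c \<in> C xi}"
    by (rule bchoice[THEN exE])
  then have C: "\<And>xi. xi \<in> Xi \<Longrightarrow> compact (C xi) \<and> C xi \<subseteq> conjN xi \<and>
      conjN xi = {d \<circ> c | d c. d \<in> Gam \<inter> conjN xi \<and> c \<in> C xi}"
    by blast
  define eta where "eta = eta0 \<union> (\<Union>xi\<in>Xi. (\<lambda>c. inv xi \<circ> c \<circ> xi) ` C xi)"
  have "compact eta"
    unfolding eta_def
  proof (intro compact_Un compact_UN assms(1,3))
    fix xi assume xi: "xi \<in> Xi"
    have "continuous_on (C xi) (\<lambda>c. inv xi \<circ> c \<circ> xi)"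
      using xi assms(2) OQ_inv OQ_linear continuous_on_linear_conj by blast
    then show "compact ((\<lambda>c. inv xi \<circ> c \<circ> xi) ` C xi)"
      using C[OF xi] compact_continuous_image by blast
  qed
  moreover have "inv xi \<circ> c \<circ> xi \<in> Nu" if xi: "xi \<in> Xi" and c: "c \<in> C xi" for xi c
  proof -
    obtain h where "h \<in> Nu" "c = xi \<circ> h \<circ> inv xi" using C[OF xi] c by (auto simp: conjN_def)
    then show ?thesis by (simp add: OQ_conj_cancel subsetD[OF assms(2) xi])
  qed
  then have "eta \<subseteq> Nu" using assms(4) by (auto simp: eta_def)
  moreover have "\<exists>d \<in> Gam \<inter> conjN xi. \<exists>n \<in> eta. xi \<circ> uN z = d \<circ> xi \<circ> n" if xi: "xi \<in> Xi" for xi z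
  proof -
    have "xi \<circ> uN z \<circ> inv xi \<in> conjN xi" by (auto simp: conjN_def Nu_def)
    then obtain d c where d: "d \<in> Gam \<inter> conjN xi" and c: "c \<in> C xi"
        and dc: "xi \<circ> uN z \<circ> inv xi = d \<circ> c"
      using C[OF xi] by blast
    have "xi \<in> OQ" using xi assms(2) by blast
    then have "xi \<circ> uN z = (xi \<circ> uN z \<circ> inv xi) \<circ> xi"
      by (simp add: o_assoc OQ_inv_comp flip: o_assoc[of _ "inv xi"])
    also have "\<dots> = d \<circ> xi \<circ> (inv xi \<circ> c \<circ> xi)"
      using \<open>xi \<in> OQ\<close> by (simp add: dc fun_eq_iff OQ_inv_right)
    finally have "xi \<circ> uN z = d \<circ> xi \<circ> (inv xi \<circ> c \<circ> xi)" .
    then show ?thesis using d c xi by (auto simp: eta_def)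
  qed
  moreover have "eta0 \<subseteq> eta" by (simp add: eta_def)
  ultimately show ?thesis using that by blast
qed

text \<open>\<open>lorB P ((g \<circ> xi) null_inf) = exp (- t)\<close> says that \<open>P\<close> lies on the horosphere of depth \<open>t\<close>
  at the cusp \<open>g \<xi> \<infinity>\<close>.\<close>
lemma horosphere_in_Siegel_translate:
  assumes "g \<circ> xi \<in> OQ"
    and fund: "\<And>z. \<exists>d \<in> Gam \<inter> conjN xi. \<exists>n \<in> eta. xi \<circ> uN z = d \<circ> xi \<circ> n"
    and "lorQ P = 2" "lorB P ((g \<circ> xi) null_inf) = exp (- t)"
  obtains d n where "d \<in> Gam \<inter> conjN xi" "n \<in> eta" "P = (g \<circ> d \<circ> xi \<circ> n \<circ> ator t) base_pt"
proof -
  define w where "w = inv (g \<circ> xi) P"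
  have P: "P = (g \<circ> xi) w" using OQ_inv_right[OF assms(1)] by (simp add: w_def)
  have "lorQ w = 2" using assms(1,3) by (simp add: w_def OQ_lorQ OQ_inv)
  moreover have "lorB w null_inf = exp (- t)" using assms(4) OQ_lorB[OF assms(1)] by (simp add: P)
  ultimately obtain z where "w = uN z (ator t base_pt)" by (rule hyperboloid_in_horosphere)
  moreover obtain d n where "d \<in> Gam \<inter> conjN xi" "n \<in> eta" "xi \<circ> uN z = d \<circ> xi \<circ> n"
    using fund by blast
  ultimately show ?thesis using that P by (metis comp_apply)
qed

lemma same_cusp_of_conjNM:
  assumes "xi \<in> OQ" "g2 \<circ> d2 \<in> OQ" "d1 \<in> conjN xi" "d2 \<in> conjN xi"
    and "inv (g2 \<circ> d2) \<circ> (g1 \<circ> d1) \<in> conjNM xi"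
  shows "(g1 \<circ> xi) null_inf = (g2 \<circ> xi) null_inf"
proof -
  have "(g1 \<circ> xi) null_inf = (g2 \<circ> d2) ((inv (g2 \<circ> d2) \<circ> (g1 \<circ> d1)) (xi null_inf))"
    using assms(3) OQ_inv_right[OF assms(2)] by (simp add: conjN_fixes_cusp[OF assms(1)])
  also have "\<dots> = (g2 \<circ> d2) (xi null_inf)"
    using conjNM_fixes_cusp[OF assms(1,5)] by (simp only:)
  finally show ?thesis using assms(4) by (simp add: conjN_fixes_cusp[OF assms(1)])
qed

text \<open>A common point exhibits \<open>\<gamma> \<xi>\<^sub>1 \<Omega>(\<eta>, s0) \<inter> \<xi>\<^sub>2 \<Omega>(\<eta>, s1) \<noteq> {}\<close> for
  \<open>\<gamma> = (g\<^sub>2 d\<^sub>2)\<^sup>-\<^sup>1 g\<^sub>1 d\<^sub>1\<close>, and the resulting \<open>\<gamma> \<in> \<xi> N M \<xi>\<^sup>-\<^sup>1\<close> fixes the cusp.\<close>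
lemma deep_horoballs_same_cusp:
  assumes Gam: "is_subgroup Gam" and "Xi \<subseteq> Gr" "eta \<subseteq> Nu"
    and fund: "\<And>xi z. xi \<in> Xi \<Longrightarrow> \<exists>d \<in> Gam \<inter> conjN xi. \<exists>n \<in> eta. xi \<circ> uN z = d \<circ> xi \<circ> n"
    and sep: "\<forall>g\<in>Gam. \<forall>xi1\<in>Xi. \<forall>xi2\<in>Xi.
            ((\<lambda>w. g \<circ> xi1 \<circ> w) ` Omega eta s0) \<inter> ((\<lambda>w. xi2 \<circ> w) ` Omega eta s1) \<noteq> {}
            \<longrightarrow> xi1 = xi2 \<and> g \<in> conjNM xi1"
    and "s0 \<le> t" "s1 \<le> t"
    and g1: "g1 \<in> Gam" and g2: "g2 \<in> Gam" and xi1: "xi1 \<in> Xi" and xi2: "xi2 \<in> Xi"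
    and "lorQ P = 2"
    and "lorB P ((g1 \<circ> xi1) null_inf) = exp (- t)" "lorB P ((g2 \<circ> xi2) null_inf) = exp (- t)"
  shows "(g1 \<circ> xi1) null_inf = (g2 \<circ> xi2) null_inf"
proof -
  have GamG: "Gam \<subseteq> Gr" using Gam by (simp add: is_subgroup_def)
  have OQ: "x \<in> OQ" if "x \<in> Gr" for x using that Gr_OQ by blast
  have "g1 \<circ> xi1 \<in> OQ" "g2 \<circ> xi2 \<in> OQ"
    using g1 g2 xi1 xi2 assms(2) is_subgroup_comp_OQ[OF Gam] by blast+
  obtain d1 n1 where d1: "d1 \<in> Gam \<inter> conjN xi1" and n1: "n1 \<in> eta"
      and P1: "P = (g1 \<circ> d1 \<circ> xi1 \<circ> n1 \<circ> ator t) base_pt"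
    using horosphere_in_Siegel_translate[OF \<open>g1 \<circ> xi1 \<in> OQ\<close> fund[OF xi1] assms(12,13)] .
  obtain d2 n2 where d2: "d2 \<in> Gam \<inter> conjN xi2" and n2: "n2 \<in> eta"
      and P2: "P = (g2 \<circ> d2 \<circ> xi2 \<circ> n2 \<circ> ator t) base_pt"
    using horosphere_in_Siegel_translate[OF \<open>g2 \<circ> xi2 \<in> OQ\<close> fund[OF xi2] assms(12,14)] .
  define G1 where "G1 = g1 \<circ> d1 \<circ> xi1 \<circ> n1 \<circ> ator t"
  define G2 where "G2 = g2 \<circ> d2 \<circ> xi2 \<circ> n2 \<circ> ator t"
  define gam where "gam = inv (g2 \<circ> d2) \<circ> (g1 \<circ> d1)"
  have "g1 \<in> Gr" "g2 \<in> Gr" "d1 \<in> Gr" "d2 \<in> Gr" "xi1 \<in> Gr" "xi2 \<in> Gr" "n1 \<in> Gr" "n2 \<in> Gr"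
    using g1 g2 d1 d2 xi1 xi2 n1 n2 GamG assms(2,3) Nu_Gr by blast+
  then have G: "G1 \<in> Gr" "G2 \<in> Gr" "g2 \<circ> d2 \<in> Gr"
    unfolding G1_def G2_def by (simp_all add: Gr_comp ator_Gr)
  have k: "inv G1 \<circ> G2 \<in> Kc" using G P1 P2 by (intro inv_comp_Kc) (simp_all add: G1_def G2_def)
  have "gam \<circ> xi1 \<circ> (n1 \<circ> ator t \<circ> (inv G1 \<circ> G2)) = inv (g2 \<circ> d2) \<circ> G1 \<circ> inv G1 \<circ> G2"
    by (simp add: gam_def G1_def o_assoc)
  also have "\<dots> = xi2 \<circ> (n2 \<circ> ator t \<circ> id)"
    using OQ_inv_right[OF OQ[OF G(1)]] OQ_inv_left[OF OQ[OF G(3)], simplified]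
    by (simp add: G2_def fun_eq_iff)
  finally have "((\<lambda>w. gam \<circ> xi1 \<circ> w) ` Omega eta s0) \<inter> ((\<lambda>w. xi2 \<circ> w) ` Omega eta s1) \<noteq> {}"
    using Omega_memI[OF n1 \<open>s0 \<le> t\<close> k] Omega_memI[OF n2 \<open>s1 \<le> t\<close> id_Kc] by blast
  moreover have "gam \<in> Gam" using Gam g1 g2 d1 d2 by (simp add: is_subgroup_def gam_def)
  ultimately have xi: "xi2 = xi1" and "gam \<in> conjNM xi1" using sep xi1 xi2 by blast+
  then show ?thesis
    using same_cusp_of_conjNM xi1 xi d1 d2 assms(2) OQ G(3) unfolding gam_def by blast
qed

lemma hyperboloid_point_between_null:
  assumes "lorQ N1 = 0" "lorQ N2 = 0" "0 < lorB N1 N2"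
  defines "P \<equiv> (1 / sqrt (lorB N1 N2)) *\<^sub>R (N1 + N2)"
  shows "lorQ P = 2" "lorB P N1 = sqrt (lorB N1 N2)" "lorB P N2 = sqrt (lorB N1 N2)"
proof -
  have "lorB N1 N1 = 0" "lorB N2 N2 = 0" using assms(1,2) by (simp_all add: lorQ_eq_lorB)
  moreover have "sqrt (lorB N1 N2) ^ 2 = lorB N1 N2" using assms(3) by simp
  ultimately show "lorQ P = 2" "lorB P N1 = sqrt (lorB N1 N2)" "lorB P N2 = sqrt (lorB N1 N2)"
    using assms(3) unfolding P_def lorQ_eq_lorB
    by (simp_all add: lorB_add_left lorB_add_right lorB_scaleR_left lorB_scaleR_right lorB_sym[of N2 N1]
        power2_eq_square field_simps)
qed

lemma cusp_pairing_lower_bound: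
  assumes Gam: "is_subgroup Gam" and "Xi \<subseteq> Gr" "eta \<subseteq> Nu"
    and fund: "\<And>xi z. xi \<in> Xi \<Longrightarrow> \<exists>d \<in> Gam \<inter> conjN xi. \<exists>n \<in> eta. xi \<circ> uN z = d \<circ> xi \<circ> n"
    and sep: "\<forall>g\<in>Gam. \<forall>xi1\<in>Xi. \<forall>xi2\<in>Xi.
            ((\<lambda>w. g \<circ> xi1 \<circ> w) ` Omega eta s0) \<inter> ((\<lambda>w. xi2 \<circ> w) ` Omega eta s1) \<noteq> {}
            \<longrightarrow> xi1 = xi2 \<and> g \<in> conjNM xi1"
    and "s0 \<le> s1"
    and g1: "g1 \<in> Gam" and g2: "g2 \<in> Gam" and xi1: "xi1 \<in> Xi" and xi2: "xi2 \<in> Xi"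
    and pos: "0 < lorB ((g1 \<circ> xi1) null_inf) ((g2 \<circ> xi2) null_inf)"
  shows "exp (- s1) ^ 2 \<le> lorB ((g1 \<circ> xi1) null_inf) ((g2 \<circ> xi2) null_inf)"
proof (rule ccontr)
  define N1 where "N1 = (g1 \<circ> xi1) null_inf"
  define N2 where "N2 = (g2 \<circ> xi2) null_inf"
  define t where "t = - ln (sqrt (lorB N1 N2))"
  assume "\<not> ?thesis"
  then have "sqrt (lorB N1 N2) < exp (- s1)"
    using pos by (simp add: N1_def N2_def real_less_lsqrt)
  then have "ln (sqrt (lorB N1 N2)) < ln (exp (- s1))"
    using pos by (subst ln_less_cancel_iff) (simp_all add: N1_def N2_def)
  then have "s1 < t" by (simp add: t_def)
  have null: "lorQ N1 = 0" "lorQ N2 = 0"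
    unfolding N1_def N2_def using g1 g2 xi1 xi2 assms(2)
    by (meson OQ_null_inf_isotropic is_subgroup_comp_OQ[OF Gam] subsetD)+
  have "exp (- t) = sqrt (lorB N1 N2)" using pos by (simp add: t_def N1_def N2_def)
  then have "lorQ P = 2" "lorB P N1 = exp (- t)" "lorB P N2 = exp (- t)"
    if "P = (1 / sqrt (lorB N1 N2)) *\<^sub>R (N1 + N2)" for P
    using hyperboloid_point_between_null[OF null] pos that by (simp_all add: N1_def N2_def)
  moreover have "s0 \<le> t" "s1 \<le> t" using \<open>s0 \<le> s1\<close> \<open>s1 < t\<close> by simp_all
  ultimately have "N1 = N2"
    unfolding N1_def N2_def by (metis deep_horoballs_same_cusp[OF Gam assms(2,3) fund sep _ _ g1 g2 xi1 xi2])
  then show False using pos null by (simp add: N1_def N2_def lorQ_eq_lorB)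
qed

lemma sqrt_bound_of_square_bound:
  fixes a c d :: real
  assumes "0 < a" "0 \<le> d" "c ^ 2 \<le> a * d ^ 2 / 2"
  shows "sqrt 2 * c / sqrt a \<le> d"
proof -
  have "sqrt 2 * c / sqrt a \<le> sqrt (2 * c ^ 2 / a)"
    using assms(1) by (simp add: real_sqrt_mult real_sqrt_divide divide_right_mono)
  also have "\<dots> \<le> sqrt (d ^ 2)"
    using assms by (intro real_sqrt_le_mono) (simp add: field_simps)
  finally show ?thesis using assms(2) by simp
qed

theorem proposition3p9:
  fixes Gam :: "('v::euclidean_space) grp set"
    and Xi :: "'v grp set"
    and eta0 :: "'v grp set"
    and s0 :: real
    and x0 :: 'v and R :: real
  assumes subgrp: "is_subgroup Gam"
    and discr: "discrete_set Gam"
    and s0_pos: "s0 > 0"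
    and eta0_cpt: "compact eta0" and eta0_N: "eta0 \<subseteq> Nu"
    and Xi_fin: "finite Xi" and Xi_id: "id \<in> Xi" and Xi_G: "Xi \<subseteq> Gr"
    and cond_i: "Gr = {g \<circ> xi \<circ> w | g xi w. g \<in> Gam \<and> xi \<in> Xi \<and> w \<in> Omega eta0 s0}"
    and cond_ii: "\<forall>xi\<in>Xi. cocompact_in (Gam \<inter> conjN xi) (conjN xi)"
    and cond_iii: "\<forall>eta. compact eta \<and> eta \<subseteq> Nu \<longrightarrow>
         finite {g \<in> Gam. {g \<circ> xi \<circ> w | xi w. xi \<in> Xi \<and> w \<in> Omega eta s0} \<inter> Omega eta s0 \<noteq> {}}"
    and cond_iv: "\<forall>eta. compact eta \<and> eta0 \<subseteq> eta \<and> eta \<subseteq> Nu \<longrightarrow>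
         (\<exists>s1 > s0. \<forall>g\<in>Gam. \<forall>xi1\<in>Xi. \<forall>xi2\<in>Xi.
            ((\<lambda>w. g \<circ> xi1 \<circ> w) ` Omega eta s0) \<inter> ((\<lambda>w. xi2 \<circ> w) ` Omega eta s1) \<noteq> {}
            \<longrightarrow> xi1 = xi2 \<and> g \<in> conjNM xi1)"
  shows "\<exists>c > 0. \<forall>g1\<in>Gam. \<forall>g2\<in>Gam. \<forall>xi1\<in>Xi. \<forall>xi2\<in>Xi. \<forall>x1 x2 r1 r2.
           bruhat_coords (g1 \<circ> xi1) x1 r1 \<longrightarrow> bruhat_coords (g2 \<circ> xi2) x2 r2 \<longrightarrow>
           x1 \<in> cball x0 R \<longrightarrow> x2 \<in> cball x0 R \<longrightarrow> x1 \<noteq> x2 \<longrightarrow>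
           norm (x1 - x2) \<ge> c / sqrt (exp r1 * exp r2)"
proof -
  have "Xi \<subseteq> OQ" using Xi_G Gr_OQ by blast
  then obtain eta where eta: "compact eta" "eta0 \<subseteq> eta" "eta \<subseteq> Nu"
    and fund: "\<And>xi z. xi \<in> Xi \<Longrightarrow> \<exists>d \<in> Gam \<inter> conjN xi. \<exists>n \<in> eta. xi \<circ> uN z = d \<circ> xi \<circ> n"
    using cusp_fundamental_set[OF Xi_fin _ eta0_cpt eta0_N cond_ii] by blast
  then obtain s1 where "s1 > s0" and sep: "\<forall>g\<in>Gam. \<forall>xi1\<in>Xi. \<forall>xi2\<in>Xi.
      ((\<lambda>w. g \<circ> xi1 \<circ> w) ` Omega eta s0) \<inter> ((\<lambda>w. xi2 \<circ> w) ` Omega eta s1) \<noteq> {}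
      \<longrightarrow> xi1 = xi2 \<and> g \<in> conjNM xi1"
    using mp[OF spec[OF cond_iv, of eta]] eta by blast
  show ?thesis
  proof (intro exI[of _ "sqrt 2 * exp (- s1)"] conjI allI impI ballI)
    fix g1 g2 xi1 xi2 x1 x2 r1 r2
    assume g: "g1 \<in> Gam" "g2 \<in> Gam" "xi1 \<in> Xi" "xi2 \<in> Xi" and "x1 \<noteq> x2"
      and "bruhat_coords (g1 \<circ> xi1) x1 r1" "bruhat_coords (g2 \<circ> xi2) x2 r2"
    then have pairing: "lorB ((g1 \<circ> xi1) null_inf) ((g2 \<circ> xi2) null_inf)
        = exp r1 * exp r2 * (norm (x1 - x2))^2 / 2"
      by (simp only: bruhat_coords_null_inf lorB_null_vec)
    have "0 < lorB ((g1 \<circ> xi1) null_inf) ((g2 \<circ> xi2) null_inf)"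
      unfolding pairing using \<open>x1 \<noteq> x2\<close> by simp
    then have bound: "exp (- s1) ^ 2 \<le> exp r1 * exp r2 * (norm (x1 - x2))^2 / 2"
      using cusp_pairing_lower_bound[OF subgrp Xi_G eta(3) fund sep _ g] \<open>s1 > s0\<close> pairing
      by simp
    show "sqrt 2 * exp (- s1) / sqrt (exp r1 * exp r2) \<le> norm (x1 - x2)"
      by (rule sqrt_bound_of_square_bound[OF _ _ bound]) simp_all
  qed simp
qed

end
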